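(* Suppose $\Delta_{\mathfrak g}$ is one of the seven irreducible locally affine root systems $X_J^{(r)}$ of infinite rank, realized as below, and let $\lambda\in i\mathfrak t_{\mathfrak g}^*$ with $\lambda_c:=\lambda(c)>0$. Write $\lambda_j:=\lambda$-coordinate at $j\in J$ (i.e. $\lambda|_{\mathfrak t}$ corresponds to $j\mapsto\lambda_j=\lambda(E_j)$). Then $\lambda$ is $d$-minimal iff: $A_J^{(1)}$: $\sup_j\lambda_j-\inf_j\lambda_j\le\lambda_c$; $B_J^{(1)}$: $|\lambda_j|+|\lambda_k|\le\lambda_c$ for $j\neq k$; $C_J^{(1)}$: $|\lambda_j|\le\lambda_c$ for all $j$; $D_J^{(1)}$: $|\lambda_j|+|\lambda_k|\le\lambda_c$ for $j\ne k$; $B_J^{(2)}$: $|\lambda_j|\le\lambda_c$ for all $j$; $C_J^{(2)}$: $|\lambda_j|+|\lambda_k|\le2\lambda_c$ for $j\ne k$; $BC_J^{(2)}$: $|\lambda_j|\le\lambda_c$ for all $j$.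
   Context: Setting: $\mathfrak k$ a simple infinite-dimensional Hilbert–Lie algebra with normalized scalar product ($(\alpha,\alpha)=2$ for long roots), $\phi$ a finite order automorphism; $\mathfrak g=\widehat{\mathcal L}_\phi(\mathfrak k)$ the double extension $\mathbb R\times\mathcal L_\phi(\mathfrak k)\times\mathbb R$ of smooth $\phi$-twisted loops with bracket $[(z_1,\xi_1,t_1),(z_2,\xi_2,t_2)]=(\langle\xi_1',\xi_2\rangle,t_1\xi_2'-t_2\xi_1'+[\xi_1,\xi_2],0)$; $c=(i,0,0)$, $d=(0,0,-i)$; $\mathfrak t\subseteq\mathfrak k^\phi$ maximal abelian, $\mathfrak t_{\mathfrak g}=\mathbb R\oplus\mathfrak t\oplus\mathbb R$; $\mathfrak t_{\mathbb C}\cong\ell^2(J,\mathbb C)$ with coordinate functionals $\varepsilon_j$ and dual elements $E_j$. The compact roots are $(\alpha,n)$ with $(\alpha,n)(z,h,t)=\alpha(h)+itn$, $\alpha\ne0$ a $\mathfrak t$-weight on the $e^{2\pi in/N}$-eigenspace of $L(\phi)^{-1}$; they form $\Delta_{\mathfrak g}$. The seven systems: $X_J^{(1)}=X_J\times\mathbb Z$ for $X\in\{A,B,C,D\}$ with $A_J=\{\varepsilon_j-\varepsilon_k\}$, $B_J=\{\pm\varepsilon_j\pm\varepsilon_k,\pm\varepsilon_j\}$, $C_J=\{\pm\varepsilon_j\pm\varepsilon_k,\pm2\varepsilon_j\}$, $D_J=\{\pm\varepsilon_j\pm\varepsilon_k\}$ ($j\ne k$); $B_J^{(2)}=(B_J\times2\mathbb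 Z)\cup(\{\pm\varepsilon_j\}\times(2\mathbb Z+1))$; $C_J^{(2)}=(C_J\times2\mathbb Z)\cup(D_J\times(2\mathbb Z+1))$; $BC_J^{(2)}=(B_J\times2\mathbb Z)\cup(BC_J\times(2\mathbb Z+1))$, $BC_J=B_J\cup C_J$. In cases $C_J^{(1)},C_J^{(2)},BC_J^{(2)}$ the normalization gives $\|\varepsilon_j\|^2=1/2$, otherwise $\|\varepsilon_j\|^2=1$. Coroot of $(\alpha,n)$: $\check\alpha-\frac{2n}{(\alpha,\alpha)}c$. $\widehat{\mathcal W}$ is the group generated by reflections $\lambda\mapsto\lambda-\lambda(\check{\underline\alpha})\underline\alpha$, $\underline\alpha\in\Delta_{\mathfrak g}$. $\lambda\in i\mathfrak t_{\mathfrak g}^*$ (algebraic dual) is $d$-minimal if $\lambda(d)=\min(\widehat{\mathcal W}\lambda)(d)$. *)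

theory Defs
  imports "HOL-Analysis.Analysis"
begin

datatype rtype = A1 | B1 | C1 | D1 | B2 | C2 | BC2

text \<open>Coordinates on i t_g: an element (z, h, t) stands for z c + sum_j h_j E_j + t d,
  where h ranges over ell^2(J) (real coordinates w.r.t. the basis E_j dual to eps_j).\<close>
type_synonym 'j tg = "real \<times> ('j \<Rightarrow> real) \<times> real"

definition ell2 :: "('j \<Rightarrow> real) set" where
  "ell2 = {h. (\<lambda>j. (h j)^2) summable_on UNIV}"

definition tg_space :: "'j tg set" where
  "tg_space = {(z, h, t). h \<in> ell2}"

definition tg_add :: "'j tg \<Rightarrow> 'j tg \<Rightarrow> 'j tg" where
  "tg_add x y = (case x of (z1, h1, t1) \<Rightarrow> case y of (z2, h2, t2) \<Rightarrow>
      (z1 + z2, (\<lambda>j. h1 j + h2 j), t1 + t2))"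

definition tg_scale :: "real \<Rightarrow> 'j tg \<Rightarrow> 'j tg" where
  "tg_scale r x = (case x of (z, h, t) \<Rightarrow> (r * z, (\<lambda>j. r * h j), r * t))"

text \<open>Algebraic dual: linear (not necessarily continuous) real functionals on i t_g.\<close>
definition linear_functional :: "('j tg \<Rightarrow> real) \<Rightarrow> bool" where
  "linear_functional f \<longleftrightarrow>
     (\<forall>x\<in>tg_space. \<forall>y\<in>tg_space. f (tg_add x y) = f x + f y) \<and>
     (\<forall>r. \<forall>x\<in>tg_space. f (tg_scale r x) = r * f x)"

definition cc :: "'j tg" where "cc = (1, (\<lambda>_. 0), 0)"
definition dd :: "'j tg" where "dd = (0, (\<lambda>_. 0), 1)"

definition eps :: "'j \<Rightarrow> 'j \<Rightarrow> real" where
  "eps j = (\<lambda>i. if i = j then 1 else 0)"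

definition Ej :: "'j \<Rightarrow> 'j tg" where "Ej j = (0, eps j, 0)"

text \<open>Finite root systems (roots given by their coefficient functions w.r.t. eps_j).\<close>
definition Aset :: "('j \<Rightarrow> real) set" where
  "Aset = {(\<lambda>i. eps j i - eps k i) | j k. j \<noteq> k}"

definition Dset :: "('j \<Rightarrow> real) set" where
  "Dset = {(\<lambda>i. s * eps j i + t * eps k i) | j k s t.
             j \<noteq> k \<and> s \<in> {1, -1} \<and> t \<in> {1, -1}}"

definition shortset :: "('j \<Rightarrow> real) set" where
  "shortset = {(\<lambda>i. s * eps j i) | j s. s \<in> {1, -1}}"

definition longset :: "('j \<Rightarrow> real) set" where
  "longset = {(\<lambda>i. 2 * s * eps j i) | j s. s \<in> {1, -1}}"

definition Bset :: "('j \<Rightarrow> real) set" where "Bset = Dset \<union> shortset"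
definition Cset :: "('j \<Rightarrow> real) set" where "Cset = Dset \<union> longset"
definition BCset :: "('j \<Rightarrow> real) set" where "BCset = Bset \<union> Cset"

text \<open>Compact roots (alpha, n) of the locally affine root system.\<close>
definition roots :: "rtype \<Rightarrow> (('j \<Rightarrow> real) \<times> int) set" where
  "roots X = (case X of
      A1 \<Rightarrow> Aset \<times> UNIV
    | B1 \<Rightarrow> Bset \<times> UNIV
    | C1 \<Rightarrow> Cset \<times> UNIV
    | D1 \<Rightarrow> Dset \<times> UNIV
    | B2 \<Rightarrow> (Bset \<times> {n. even n}) \<union> (shortset \<times> {n. odd n})
    | C2 \<Rightarrow> (Cset \<times> {n. even n}) \<union> (Dset \<times> {n. odd n})
    | BC2 \<Rightarrow> (Bset \<times> {n. even n}) \<union> (BCset \<times> {n. odd n}))"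

text \<open>Normalization: the value of (eps_j, eps_j).\<close>
definition kappa :: "rtype \<Rightarrow> real" where
  "kappa X = (if X \<in> {C1, C2, BC2} then 1/2 else 1)"

definition sqsum :: "('j \<Rightarrow> real) \<Rightarrow> real" where
  "sqsum a = (\<Sum>j | a j \<noteq> 0. (a j)^2)"

text \<open>(alpha, alpha) for alpha = sum a_j eps_j.\<close>
definition rootnorm :: "rtype \<Rightarrow> ('j \<Rightarrow> real) \<Rightarrow> real" where
  "rootnorm X a = kappa X * sqsum a"

definition rootf :: "('j \<Rightarrow> real) \<times> int \<Rightarrow> 'j tg \<Rightarrow> real" where
  "rootf r x = (case r of (a, n) \<Rightarrow> case x of (z, h, t) \<Rightarrow>
      (\<Sum>j | a j \<noteq> 0. a j * h j) + t * of_int n)"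

text \<open>Coroot: check(alpha) - 2n/(alpha,alpha) c, where check(alpha) = 2 alpha^sharp/(alpha,alpha)
  and alpha^sharp is the element representing alpha via the scalar product
  ((E_j,E_k) = delta_jk / kappa).\<close>
definition coroot :: "rtype \<Rightarrow> ('j \<Rightarrow> real) \<times> int \<Rightarrow> 'j tg" where
  "coroot X r = (case r of (a, n) \<Rightarrow>
      (- 2 * of_int n / rootnorm X a,
       (\<lambda>j. 2 * (kappa X * a j) / rootnorm X a),
       0))"

definition refl :: "rtype \<Rightarrow> ('j \<Rightarrow> real) \<times> int \<Rightarrow> ('j tg \<Rightarrow> real) \<Rightarrow> ('j tg \<Rightarrow> real)" where
  "refl X r \<mu> = (\<lambda>x. \<mu> x - \<mu> (coroot X r) * rootf r x)"

text \<open>Orbit of lambda under the group generated by the reflections (the reflections are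
  involutions, so the orbit is the closure under reflections).\<close>
inductive_set orbit :: "rtype \<Rightarrow> ('j tg \<Rightarrow> real) \<Rightarrow> ('j tg \<Rightarrow> real) set"
  for X :: rtype and lam :: "'j tg \<Rightarrow> real" where
  base: "lam \<in> orbit X lam"
| step: "\<mu> \<in> orbit X lam \<Longrightarrow> r \<in> roots X \<Longrightarrow> refl X r \<mu> \<in> orbit X lam"

definition d_minimal :: "rtype \<Rightarrow> ('j tg \<Rightarrow> real) \<Rightarrow> bool" where
  "d_minimal X lam \<longleftrightarrow> (\<forall>\<mu>\<in>orbit X lam. lam dd \<le> \<mu> dd)"

definition dmin_cond :: "rtype \<Rightarrow> ('j tg \<Rightarrow> real) \<Rightarrow> bool" where
  "dmin_cond X lam = (let lc = lam cc; l = (\<lambda>j. lam (Ej j)) in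
    (case X of
      A1 \<Rightarrow> (SUP j. ereal (l j)) - (INF j. ereal (l j)) \<le> ereal lc
    | B1 \<Rightarrow> (\<forall>j k. j \<noteq> k \<longrightarrow> \<bar>l j\<bar> + \<bar>l k\<bar> \<le> lc)
    | C1 \<Rightarrow> (\<forall>j. \<bar>l j\<bar> \<le> lc)
    | D1 \<Rightarrow> (\<forall>j k. j \<noteq> k \<longrightarrow> \<bar>l j\<bar> + \<bar>l k\<bar> \<le> lc)
    | B2 \<Rightarrow> (\<forall>j. \<bar>l j\<bar> \<le> lc)
    | C2 \<Rightarrow> (\<forall>j k. j \<noteq> k \<longrightarrow> \<bar>l j\<bar> + \<bar>l k\<bar> \<le> 2 * lc)
    | BC2 \<Rightarrow> (\<forall>j. \<bar>l j\<bar> \<le> lc)))"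

end

theory Submission
  imports Defs
begin

text \<open>
  Write l_j = lam(E_j), lc = lam(c) > 0 and B = u lc, where the translation unit u is 1 for
  A, B, D of type (1) and 2 otherwise.  Every mu in the Weyl orbit of lam has a normal form:
  its coordinates are a signed permutation of the translated coordinates l_i + B m_i
  (m finitely supported and integral, with a parity constraint on the sum of m), and
    mu(d) = lam(d) + kappa/(2 lc) * sum_i gain B l_i m_i,  gain B l m = 2 l (B m) + (B m)^2.
  This is shown by induction over the orbit, checking that each reflection (in a root of
  the form +-eps_j +- eps_k or gamma eps_j) preserves the normal form.
  Sufficiency: under the stated coordinate condition every gain sum is nonnegative
  (elementary estimates on gain).  Necessity: if the condition fails, a single explicit
  reflection with n = 1 strictly lowers the d-value.
\<close>

lemma finite_support_ell2:
  assumes "finite S" "\<And>i. i \<notin> S \<Longrightarrow> h i = 0"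
  shows "h \<in> ell2"
proof -
  have "(\<lambda>j. (h j)^2) summable_on S" using assms(1) by simp
  then show ?thesis unfolding ell2_def
    by (subst (asm) summable_on_cong_neutral[where T=UNIV and g="\<lambda>j. (h j)^2"]) (auto simp: assms(2))
qed

lemma linear_functional_finite_support:
  assumes lin: "linear_functional mu" and fin: "finite S"
  shows "(\<forall>i. i \<notin> S \<longrightarrow> h i = 0) \<longrightarrow> mu (z, h, 0) = z * mu cc + (\<Sum>i\<in>S. h i * mu (Ej i))"
  using fin
proof (induction S arbitrary: h z)
  case empty
  show ?case
  proof
    assume "\<forall>i. i \<notin> {} \<longrightarrow> h i = 0"
    then have "(z, h, 0) = tg_scale z cc" by (auto simp: tg_scale_def cc_def)
    moreover have "cc \<in> tg_space"
      unfolding tg_space_def cc_def using finite_support_ell2[of "{}" "\<lambda>_. 0::real"] by auto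
    ultimately show "mu (z, h, 0) = z * mu cc + (\<Sum>i\<in>{}. h i * mu (Ej i))"
      using lin unfolding linear_functional_def by auto
  qed
next
  case (insert j S)
  show ?case
  proof
    assume H: "\<forall>i. i \<notin> insert j S \<longrightarrow> h i = 0"
    define h' where "h' = h(j := 0)"
    have h'S: "\<forall>i. i \<notin> S \<longrightarrow> h' i = 0" using H by (auto simp: h'_def)
    have split: "(z, h, 0) = tg_add (z, h', 0) (tg_scale (h j) (Ej j))"
      by (auto simp: tg_add_def tg_scale_def Ej_def eps_def h'_def)
    have "(z, h', 0) \<in> tg_space"
      unfolding tg_space_def using finite_support_ell2[of S h'] h'S insert by auto
    moreover have "tg_scale (h j) (Ej j) \<in> tg_space" "Ej j \<in> tg_space"
      unfolding tg_space_def tg_scale_def Ej_def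
      using finite_support_ell2[of "{j}" "\<lambda>i. h j * eps j i"] finite_support_ell2[of "{j}" "eps j"]
      by (auto simp: eps_def)
    ultimately have "mu (z, h, 0) = mu (z, h', 0) + h j * mu (Ej j)"
      using lin unfolding linear_functional_def split by simp
    also have "mu (z, h', 0) = z * mu cc + (\<Sum>i\<in>S. h' i * mu (Ej i))" using insert.IH h'S by blast
    also have "(\<Sum>i\<in>S. h' i * mu (Ej i)) = (\<Sum>i\<in>S. h i * mu (Ej i))"
      using insert.hyps by (intro sum.cong) (auto simp: h'_def)
    finally show "mu (z, h, 0) = z * mu cc + (\<Sum>i\<in>insert j S. h i * mu (Ej i))"
      using insert.hyps by simp
  qed
qed

lemma linear_functional_eval:
  assumes "linear_functional mu" "finite S" "\<And>i. i \<notin> S \<Longrightarrow> h i = 0"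
  shows "mu (z, h, 0) = z * mu cc + (\<Sum>i\<in>S. h i * mu (Ej i))"
  using linear_functional_finite_support[OF assms(1,2)] assms(3) by blast

lemma rootf_linear: "linear_functional (rootf r)"
  unfolding linear_functional_def rootf_def tg_add_def tg_scale_def
  by (auto split: prod.splits simp: sum.distrib algebra_simps sum_distrib_left)

lemma refl_linear: "linear_functional mu \<Longrightarrow> linear_functional (refl X r mu)"
  using rootf_linear[of r] unfolding linear_functional_def refl_def by (auto simp: algebra_simps)

definition pair_root :: "real \<Rightarrow> real \<Rightarrow> 'j \<Rightarrow> 'j \<Rightarrow> 'j \<Rightarrow> real" where
  "pair_root \<alpha> \<beta> j k = (\<lambda>i. \<alpha> * eps j i + \<beta> * eps k i)"

definition single_root :: "real \<Rightarrow> 'j \<Rightarrow> 'j \<Rightarrow> real" where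
  "single_root \<gamma> j = (\<lambda>i. \<gamma> * eps j i)"

lemma kappa_pos: "kappa X > 0"
  by (simp add: kappa_def)

lemma pair_root_support:
  "j \<noteq> k \<Longrightarrow> \<alpha> \<noteq> 0 \<Longrightarrow> \<beta> \<noteq> 0 \<Longrightarrow> {i. pair_root \<alpha> \<beta> j k i \<noteq> 0} = {j, k}"
  by (auto simp: pair_root_def eps_def)

lemma single_root_support: "\<gamma> \<noteq> 0 \<Longrightarrow> {i. single_root \<gamma> j i \<noteq> 0} = {j}"
  by (auto simp: single_root_def eps_def)

lemma sqsum_pair_root:
  assumes "j \<noteq> k" "\<alpha> \<in> {1,-1}" "\<beta> \<in> {1,-1}"
  shows "sqsum (pair_root \<alpha> \<beta> j k) = 2"
  using assms by (auto simp: sqsum_def pair_root_support) (auto simp: pair_root_def eps_def)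

lemma sqsum_single_root: "\<gamma> \<noteq> 0 \<Longrightarrow> sqsum (single_root \<gamma> j) = \<gamma>^2"
  by (simp add: sqsum_def single_root_support) (simp add: single_root_def eps_def)

lemma rootf_Ej:
  assumes "finite {i. a i \<noteq> 0}"
  shows "rootf (a, n) (Ej m) = a m"
proof -
  have "(\<Sum>i | a i \<noteq> 0. a i * eps m i) = (\<Sum>i\<in>{i. a i \<noteq> 0} \<inter> {m}. a i)"
    using assms by (intro sum.mono_neutral_cong_right) (auto simp: eps_def)
  then show ?thesis unfolding rootf_def Ej_def by (cases "a m = 0") auto
qed

lemma rootf_dd: "rootf (a, n) dd = of_int n"
  unfolding rootf_def dd_def by simp

lemma rootf_cc: "rootf (a, n) cc = 0"
  unfolding rootf_def cc_def by simp

lemma coroot_pair_value: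
  assumes lin: "linear_functional mu" and "j \<noteq> k" "\<alpha> \<in> {1,-1}" "\<beta> \<in> {1,-1}"
  shows "mu (coroot X (pair_root \<alpha> \<beta> j k, n))
           = \<alpha> * mu (Ej j) + \<beta> * mu (Ej k) - of_int n / kappa X * mu cc"
proof -
  have "coroot X (pair_root \<alpha> \<beta> j k, n) = (- of_int n / kappa X, pair_root \<alpha> \<beta> j k, 0)"
    using sqsum_pair_root[OF assms(2-4)] kappa_pos[of X]
    unfolding coroot_def rootnorm_def by (auto simp: field_simps)
  moreover have "mu (- of_int n / kappa X, pair_root \<alpha> \<beta> j k, 0)
      = (- of_int n / kappa X) * mu cc + (\<Sum>i\<in>{j,k}. pair_root \<alpha> \<beta> j k i * mu (Ej i))"
    by (intro linear_functional_eval[OF lin]) (auto simp: pair_root_def eps_def)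
  ultimately show ?thesis using assms by (simp add: pair_root_def eps_def)
qed

lemma coroot_single_value:
  assumes lin: "linear_functional mu" and \<gamma>: "\<gamma> \<noteq> 0"
  shows "mu (coroot X (single_root \<gamma> j, n))
           = 2 / \<gamma> * mu (Ej j) - 2 * of_int n / (kappa X * \<gamma>^2) * mu cc"
proof -
  have "coroot X (single_root \<gamma> j, n)
          = (- 2 * of_int n / (kappa X * \<gamma>^2), single_root (2 / \<gamma>) j, 0)"
    using sqsum_single_root[OF \<gamma>, of j] kappa_pos[of X] \<gamma>
    by (auto simp: coroot_def rootnorm_def single_root_def fun_eq_iff field_simps power2_eq_square)
  moreover have "mu (- 2 * of_int n / (kappa X * \<gamma>^2), single_root (2 / \<gamma>) j, 0)
      = (- 2 * of_int n / (kappa X * \<gamma>^2)) * mu cc + (\<Sum>i\<in>{j}. single_root (2/\<gamma>) j i * mu (Ej i))"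
    by (intro linear_functional_eval[OF lin]) (auto simp: single_root_def eps_def)
  ultimately show ?thesis by (simp add: single_root_def eps_def)
qed

lemma refl_dd: "refl X (a, n) mu dd = mu dd - mu (coroot X (a, n)) * of_int n"
  unfolding refl_def rootf_dd ..

lemma refl_cc: "refl X (a, n) mu cc = mu cc"
  unfolding refl_def rootf_cc by simp

lemma refl_pair_Ej:
  assumes "linear_functional mu" "j \<noteq> k" "\<alpha> \<in> {1,-1}" "\<beta> \<in> {1,-1}"
  shows "refl X (pair_root \<alpha> \<beta> j k, n) mu (Ej i)
     = mu (Ej i) - (\<alpha> * mu (Ej j) + \<beta> * mu (Ej k) - of_int n / kappa X * mu cc) * pair_root \<alpha> \<beta> j k i"
proof -
  have "finite {i. pair_root \<alpha> \<beta> j k i \<noteq> 0}" using pair_root_support[OF assms(2)] assms(3,4) by auto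
  then show ?thesis unfolding refl_def coroot_pair_value[OF assms] by (simp add: rootf_Ej)
qed

lemma refl_single_Ej:
  assumes "linear_functional mu" "\<gamma> \<noteq> 0"
  shows "refl X (single_root \<gamma> j, n) mu (Ej i)
     = mu (Ej i) - (2 / \<gamma> * mu (Ej j) - 2 * of_int n / (kappa X * \<gamma>^2) * mu cc) * single_root \<gamma> j i"
proof -
  have "finite {i. single_root \<gamma> j i \<noteq> 0}" by (simp add: single_root_support[OF assms(2)])
  then show ?thesis unfolding refl_def coroot_single_value[OF assms] by (simp add: rootf_Ej)
qed


text \<open>The translation unit: the affine Weyl group translates the coordinates lam(E_i) by
  integer multiples of trans_unit X * lam(c).\<close>
definition trans_unit :: "rtype \<Rightarrow> real" where
  "trans_unit X = (if X \<in> {A1, B1, D1} then 1 else 2)"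

lemma sign_cases_real: "(s::real) \<in> {1, -1} \<Longrightarrow> \<exists>a::int. a \<in> {1, -1} \<and> s = of_int a"
  by (auto intro: exI[of _ 1] exI[of _ "-1"])

lemma Dset_shape:
  assumes "a \<in> Dset"
  obtains \<alpha> \<beta> :: int and j k where "j \<noteq> k" "\<alpha> \<in> {1, -1}" "\<beta> \<in> {1, -1}"
    "a = pair_root (of_int \<alpha>) (of_int \<beta>) j k"
proof -
  obtain j k s t where a: "a = (\<lambda>i. s * eps j i + t * eps k i)" "j \<noteq> k" "s \<in> {1,-1}" "t \<in> {1,-1}"
    using assms unfolding Dset_def by blast
  obtain \<alpha> \<beta> :: int where "\<alpha> \<in> {1, -1}" "s = of_int \<alpha>" "\<beta> \<in> {1, -1}" "t = of_int \<beta>"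
    using sign_cases_real a(3,4) by metis
  then show ?thesis using that a by (simp add: pair_root_def)
qed

lemma shortset_shape:
  assumes "a \<in> shortset"
  obtains \<gamma> :: int and j where "\<gamma> \<in> {1, -1}" "a = single_root (of_int \<gamma>) j"
proof -
  obtain j s where a: "a = (\<lambda>i. s * eps j i)" "s \<in> {1,-1}" using assms unfolding shortset_def by blast
  obtain \<gamma> :: int where "\<gamma> \<in> {1, -1}" "s = of_int \<gamma>" using sign_cases_real a(2) by metis
  then show ?thesis using that a by (simp add: single_root_def)
qed

lemma longset_shape:
  assumes "a \<in> longset"
  obtains \<gamma> :: int and j where "\<gamma> \<in> {2, -2}" "a = single_root (of_int \<gamma>) j"
proof -
  obtain j s where a: "a = (\<lambda>i. 2 * s * eps j i)" "s \<in> {1,-1}" using assms unfolding longset_def by blast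
  obtain \<gamma> :: int where "\<gamma> \<in> {1, -1}" "s = of_int \<gamma>" using sign_cases_real a(2) by metis
  then show ?thesis using that[of "2 * \<gamma>" j] a by (auto simp: single_root_def)
qed

lemma root_shapes:
  assumes "(a, n) \<in> roots X"
  obtains (pair) \<alpha> \<beta> q :: int and j k where "a = pair_root (of_int \<alpha>) (of_int \<beta>) j k"
      "j \<noteq> k" "\<alpha> \<in> {1, -1}" "\<beta> \<in> {1, -1}" "X = A1 \<longrightarrow> \<alpha> * \<beta> = -1"
      "of_int n = kappa X * trans_unit X * of_int q"
  | (single) \<gamma> q :: int and j where "a = single_root (of_int \<gamma>) j" "\<gamma> \<in> {1, -1, 2, -2}" "X \<noteq> A1"
      "2 * of_int n = kappa X * trans_unit X * of_int \<gamma> * of_int q" "even q \<or> X \<in> {C1, B2, BC2}"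
proof -
  have pair_case: thesis if "a \<in> Dset" "X \<noteq> A1" "of_int n = kappa X * trans_unit X * of_int q" for q
    using Dset_shape[OF that(1)] pair that(2,3) by metis
  have short_case: thesis if a: "a \<in> shortset" and X: "X \<in> {B1, B2, BC2}"
  proof -
    obtain \<gamma> j where \<gamma>: "\<gamma> \<in> {1, -1}" "a = single_root (of_int \<gamma>) j" using shortset_shape[OF a] .
    define q where "q = (if X = B2 then n * \<gamma> else 2 * n * \<gamma>)"
    have "2 * of_int n = kappa X * trans_unit X * of_int \<gamma> * of_int q" "even q \<or> X \<in> {C1, B2, BC2}"
      using \<gamma>(1) X by (auto simp: q_def kappa_def trans_unit_def)
    then show thesis using single[OF \<gamma>(2)] \<gamma>(1) X by auto
  qed
  have long_case: thesis if a: "a \<in> longset" and X: "X \<in> {C1, C2, BC2}" "X = C2 \<longrightarrow> even n"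
  proof -
    obtain \<gamma> j where \<gamma>: "\<gamma> \<in> {2, -2}" "a = single_root (of_int \<gamma>) j" using longset_shape[OF a] .
    define q where "q = n * (\<gamma> div 2)"
    have "2 * of_int n = kappa X * trans_unit X * of_int \<gamma> * of_int q" "even q \<or> X \<in> {C1, B2, BC2}"
      using \<gamma>(1) X by (auto simp: q_def kappa_def trans_unit_def)
    then show thesis using single[OF \<gamma>(2)] \<gamma>(1) X by auto
  qed
  show thesis
  proof (cases X)
    case A1
    then obtain j k where "j \<noteq> k" "a = pair_root (of_int 1) (of_int (-1)) j k"
      using assms by (auto simp: roots_def Aset_def pair_root_def)
    then show thesis using pair[of 1 "-1" j k n] A1 by (simp add: kappa_def trans_unit_def)
  next
    case B2
    then have "(a \<in> Dset \<and> even n) \<or> a \<in> shortset" using assms by (auto simp: roots_def Bset_def)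
    then show thesis
      using pair_case[of "n div 2"] short_case B2 by (auto simp: kappa_def trans_unit_def elim!: evenE)
  qed (use assms pair_case[of n] short_case long_case in
        \<open>auto simp: roots_def Bset_def Cset_def BCset_def kappa_def trans_unit_def\<close>)
qed

subsection \<open>A normal form for the elements of the orbit\<close>

text \<open>Parity constraint on the total translation: zero in type A1, even in the types whose
  single roots are absent or only give even translations.\<close>
definition parity_ok :: "rtype \<Rightarrow> int \<Rightarrow> bool" where
  "parity_ok X s = (if X = A1 then s = 0 else if X \<in> {B1, D1, C2} then even s else True)"

text \<open>Increase of a squared coordinate (l + B m)^2 - l^2 when l is translated by B m.\<close>
definition gain :: "real \<Rightarrow> real \<Rightarrow> int \<Rightarrow> real" where
  "gain B l m = 2 * l * (B * of_int m) + (B * of_int m)^2"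

text \<open>mu is obtained from lam by translating the coordinates lam(E_i) by B m_i
  (B = trans_unit X * lam c), permuting them by sigma and changing signs by e; the d-value
  grows by kappa/(2 lam c) times the total gain of the translation.\<close>
definition normal_form :: "rtype \<Rightarrow> ('j tg \<Rightarrow> real) \<Rightarrow> ('j tg \<Rightarrow> real) \<Rightarrow> ('j \<Rightarrow> 'j)
    \<Rightarrow> ('j \<Rightarrow> int) \<Rightarrow> ('j \<Rightarrow> int) \<Rightarrow> 'j set \<Rightarrow> bool" where
  "normal_form X lam mu \<sigma> e m F \<longleftrightarrow>
     linear_functional mu \<and> mu cc = lam cc \<and> bij \<sigma> \<and> (\<forall>i. e i \<in> {1, -1})
     \<and> (X = A1 \<longrightarrow> (\<forall>i. e i = 1)) \<and> finite F \<and> (\<forall>i. i \<notin> F \<longrightarrow> m i = 0) \<and> parity_ok X (sum m F)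
     \<and> (\<forall>i. mu (Ej i) = of_int (e i) * (lam (Ej (\<sigma> i)) + trans_unit X * lam cc * of_int (m (\<sigma> i))))
     \<and> mu dd = lam dd + kappa X / (2 * lam cc) * (\<Sum>i\<in>F. gain (trans_unit X * lam cc) (lam (Ej i)) (m i))"

lemma normal_form_base: "linear_functional lam \<Longrightarrow> normal_form X lam lam id (\<lambda>_. 1) (\<lambda>_. 0) {}"
  unfolding normal_form_def by (cases X) (auto simp: parity_ok_def)

lemma sum_union_supports:
  fixes f g :: "'a \<Rightarrow> 'b::comm_monoid_add"
  assumes "finite F" "finite T" "\<And>i. i \<notin> F \<Longrightarrow> f i = 0" "\<And>i. i \<notin> T \<Longrightarrow> g i = 0"
  shows "(\<Sum>i\<in>F \<union> T. f i + g i) = sum f F + sum g T"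
proof -
  have "sum f (F \<union> T) = sum f F" "sum g (F \<union> T) = sum g T"
    using assms by (auto intro: sum.mono_neutral_right)
  then show ?thesis by (simp add: sum.distrib)
qed

lemma gain_sum_shift:
  assumes "finite F" "finite T" "\<And>i. i \<notin> F \<Longrightarrow> m i = 0" "\<And>i. i \<notin> T \<Longrightarrow> t i = 0"
  shows "(\<Sum>i\<in>F \<union> T. gain B (l i) (m i - t i)) = (\<Sum>i\<in>F. gain B (l i) (m i))
           + (\<Sum>i\<in>T. (B * of_int (t i))^2 - 2 * B * of_int (t i) * (l i + B * of_int (m i)))"
    and "(\<Sum>i\<in>F \<union> T. m i - t i) = sum m F - sum t T"
proof -
  have "gain B (l i) (m i - t i) = gain B (l i) (m i)
          + ((B * of_int (t i))^2 - 2 * B * of_int (t i) * (l i + B * of_int (m i)))" for i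
    by (simp add: gain_def algebra_simps power2_eq_square)
  then show "(\<Sum>i\<in>F \<union> T. gain B (l i) (m i - t i)) = (\<Sum>i\<in>F. gain B (l i) (m i))
           + (\<Sum>i\<in>T. (B * of_int (t i))^2 - 2 * B * of_int (t i) * (l i + B * of_int (m i)))"
    using assms by (simp only:) (rule sum_union_supports, auto simp: gain_def)
  show "(\<Sum>i\<in>F \<union> T. m i - t i) = sum m F - sum t T"
    using sum_union_supports[of F T m "\<lambda>i. - t i"] assms by (simp add: sum_negf)
qed

lemma parity_ok_shift:
  "parity_ok X s \<Longrightarrow> X \<noteq> A1 \<Longrightarrow> even q \<or> X \<in> {C1, B2, BC2} \<Longrightarrow> parity_ok X (s - q * x)"
  by (cases X) (auto simp: parity_ok_def)

lemma sign_square: "(x::int) \<in> {1, -1} \<Longrightarrow> of_int x * (of_int x :: real) = 1"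
  by auto


lemma normal_form_update:
  fixes t :: "'j \<Rightarrow> int" and X :: rtype and lam :: "'j tg \<Rightarrow> real"
  defines "B \<equiv> trans_unit X * lam cc"
  assumes D: "normal_form X lam mu \<sigma> e m F"
    and T: "finite T" and t: "\<And>i. i \<notin> T \<Longrightarrow> t i = 0"
    and lin': "linear_functional mu'" and cc': "mu' cc = lam cc" and \<sigma>': "bij \<sigma>'"
    and e': "\<forall>i. e' i \<in> {1, -1}" "X = A1 \<longrightarrow> (\<forall>i. e' i = 1)"
    and par': "parity_ok X (sum m F - sum t T)"
    and coords: "\<And>i. mu' (Ej i) = of_int (e' i) * (lam (Ej (\<sigma>' i)) + B * of_int (m (\<sigma>' i) - t (\<sigma>' i)))"
    and dd': "mu' dd = mu dd + kappa X / (2 * lam cc)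
      * (\<Sum>i\<in>T. (B * of_int (t i))^2 - 2 * B * of_int (t i) * (lam (Ej i) + B * of_int (m i)))"
  shows "normal_form X lam mu' \<sigma>' e' (\<lambda>i. m i - t i) (F \<union> T)"
proof -
  have F: "finite F" and m: "\<And>i. i \<notin> F \<Longrightarrow> m i = 0"
    and dd: "mu dd = lam dd + kappa X / (2 * lam cc) * (\<Sum>i\<in>F. gain B (lam (Ej i)) (m i))"
    using D unfolding normal_form_def B_def by auto
  have "(\<Sum>i\<in>F \<union> T. gain B (lam (Ej i)) (m i - t i)) = (\<Sum>i\<in>F. gain B (lam (Ej i)) (m i))
    + (\<Sum>i\<in>T. (B * of_int (t i))^2 - 2 * B * of_int (t i) * (lam (Ej i) + B * of_int (m i)))"
    by (rule gain_sum_shift(1)[OF F T m t])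
  then have "mu' dd = lam dd + kappa X / (2 * lam cc) * (\<Sum>i\<in>F \<union> T. gain B (lam (Ej i)) (m i - t i))"
    unfolding dd' dd by (simp only: distrib_left add.assoc)
  moreover have "(\<Sum>i\<in>F \<union> T. m i - t i) = sum m F - sum t T" by (rule gain_sum_shift(2)[OF F T m t])
  ultimately show ?thesis
    using F T m t lin' cc' \<sigma>' e' par' coords unfolding normal_form_def B_def by auto
qed


text \<open>Reflecting in a pair root (alpha eps_j + beta eps_k, n) with n = kappa u q swaps the
  coordinates j, k (up to sign) and translates them by -q alpha B and -q beta B.\<close>
lemma normal_form_pair_step:
  fixes \<alpha> \<beta> q n :: int
  assumes D: "normal_form X lam mu \<sigma> e m F" and jk: "j \<noteq> k"
    and \<alpha>: "\<alpha> \<in> {1, -1}" and \<beta>: "\<beta> \<in> {1, -1}" and A: "X = A1 \<longrightarrow> \<alpha> * \<beta> = -1"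
    and q: "of_int n = kappa X * trans_unit X * of_int q" and pos: "lam cc > 0"
  shows "\<exists>\<sigma>' e' m' F'. normal_form X lam (refl X (pair_root (of_int \<alpha>) (of_int \<beta>) j k, n) mu) \<sigma>' e' m' F'"
proof -
  define B where "B = trans_unit X * lam cc"
  define l where "l i = lam (Ej i)" for i
  define v where "v i = mu (Ej i)" for i
  have lin: "linear_functional mu" and mcc: "mu cc = lam cc" and \<sigma>: "bij \<sigma>"
    and e: "\<forall>i. e i \<in> {1, -1}" and eA: "X = A1 \<longrightarrow> (\<forall>i. e i = 1)" and par: "parity_ok X (sum m F)"
    and vE: "\<And>i. v i = of_int (e i) * (l (\<sigma> i) + B * of_int (m (\<sigma> i)))"
    using D unfolding normal_form_def B_def l_def v_def by auto
  have n: "of_int n = kappa X * B * of_int q / lam cc" using q pos unfolding B_def by simp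
  have signs: "of_int (e j) * of_int (e j) = (1::real)" "of_int (e k) * of_int (e k) = (1::real)"
    "of_int \<alpha> * of_int \<alpha> = (1::real)" "of_int \<beta> * of_int \<beta> = (1::real)"
    using e \<alpha> \<beta> by (auto intro: sign_square)
  then have sign_powers: "(of_int (e j))\<^sup>2 = (1::real)" "(of_int (e k))\<^sup>2 = (1::real)"
    "(of_int \<alpha>)\<^sup>2 = (1::real)" "(of_int \<beta>)\<^sup>2 = (1::real)"
    by (simp_all add: power2_eq_square)
  have \<alpha>\<beta>: "(of_int \<alpha> :: real) \<in> {1, -1}" "(of_int \<beta> :: real) \<in> {1, -1}" using \<alpha> \<beta> by auto
  define p where "p = of_int \<alpha> * v j + of_int \<beta> * v k - B * of_int q"
  let ?mu' = "refl X (pair_root (of_int \<alpha>) (of_int \<beta>) j k, n) mu"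
  have nB: "of_int n / kappa X * lam cc = B * of_int q" using n kappa_pos[of X] pos by simp
  have new_Ej: "\<And>i. ?mu' (Ej i) = v i - p * pair_root (of_int \<alpha>) (of_int \<beta>) j k i"
    unfolding refl_pair_Ej[OF lin jk \<alpha>\<beta>] mcc nB p_def v_def ..
  have new_dd: "?mu' dd = mu dd - p * of_int n"
    unfolding refl_dd coroot_pair_value[OF lin jk \<alpha>\<beta>] mcc nB p_def v_def ..
  define \<tau> where "\<tau> i = (if i = j then k else if i = k then j else i)" for i
  define e' where "e' i = (if i = j then - \<alpha> * \<beta> * e k else if i = k then - \<alpha> * \<beta> * e j else e i)" for i
  define t where "t i = (if i = \<sigma> j then q * \<alpha> * e j else if i = \<sigma> k then q * \<beta> * e k else 0)" for i
  have \<sigma>jk: "\<sigma> j \<noteq> \<sigma> k" using \<sigma> jk by (metis bij_pointE)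
  have "bij (\<sigma> \<circ> \<tau>)" by (rule bij_comp[OF _ \<sigma>], rule involuntory_imp_bij) (auto simp: \<tau>_def)
  moreover have "\<forall>i. e' i \<in> {1, -1}" "X = A1 \<longrightarrow> (\<forall>i. e' i = 1)"
    using e eA \<alpha> \<beta> A unfolding e'_def by auto
  moreover have "parity_ok X (sum m F - sum t {\<sigma> j, \<sigma> k})"
  proof -
    have sum_t: "sum t {\<sigma> j, \<sigma> k} = q * (\<alpha> * e j + \<beta> * e k)"
      using \<sigma>jk by (simp add: t_def algebra_simps)
    show ?thesis
    proof (cases "X = A1")
      case True then show ?thesis using par A eA \<alpha> \<beta> unfolding sum_t by (auto simp: parity_ok_def)
    next
      case False
      have "e j \<in> {1, -1}" "e k \<in> {1, -1}" using e by auto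
      then have "even (\<alpha> * e j + \<beta> * e k)" using \<alpha> \<beta> by auto
      then obtain w where w: "\<alpha> * e j + \<beta> * e k = 2 * w" by (rule evenE)
      have "parity_ok X (sum m F - 2 * q * w)" by (rule parity_ok_shift[OF par False]) simp
      then show ?thesis unfolding sum_t w by (simp add: ac_simps)
    qed
  qed
  moreover have "?mu' (Ej i) = of_int (e' i) * (l ((\<sigma> \<circ> \<tau>) i) + B * of_int (m ((\<sigma> \<circ> \<tau>) i) - t ((\<sigma> \<circ> \<tau>) i)))" for i
  proof -
    consider "i = j" | "i = k" | "i \<noteq> j" "i \<noteq> k" by blast
    then show ?thesis
    proof cases
      case 1
      have "?mu' (Ej j) = v j - p * of_int \<alpha>" using new_Ej[of j] jk by (simp add: pair_root_def eps_def)
      also have "\<dots> = - of_int \<alpha> * of_int \<beta> * v k + of_int \<alpha> * (B * of_int q)"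
        unfolding p_def using signs by (simp add: algebra_simps)
      finally show ?thesis
        using 1 jk \<sigma>jk signs unfolding vE e'_def \<tau>_def t_def by (simp add: algebra_simps)
    next
      case 2
      have "?mu' (Ej k) = v k - p * of_int \<beta>" using new_Ej[of k] jk by (simp add: pair_root_def eps_def)
      also have "\<dots> = - of_int \<alpha> * of_int \<beta> * v j + of_int \<beta> * (B * of_int q)"
        unfolding p_def using signs by (simp add: algebra_simps)
      finally show ?thesis
        using 2 jk \<sigma>jk signs unfolding vE e'_def \<tau>_def t_def by (simp add: algebra_simps)
    next
      case 3
      then have "\<sigma> i \<noteq> \<sigma> j" "\<sigma> i \<noteq> \<sigma> k" using \<sigma> by (auto dest: bij_is_inj injD)
      then show ?thesis using 3 new_Ej[of i] vE[of i] by (simp add: pair_root_def eps_def e'_def \<tau>_def t_def)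
    qed
  qed
  moreover have "?mu' dd = mu dd + kappa X / (2 * lam cc)
      * (\<Sum>i\<in>{\<sigma> j, \<sigma> k}. (B * of_int (t i))^2 - 2 * B * of_int (t i) * (l i + B * of_int (m i)))"
  proof -
    have corr: "(\<Sum>i\<in>{\<sigma> j, \<sigma> k}. (B * of_int (t i))^2 - 2 * B * of_int (t i) * (l i + B * of_int (m i)))
       = 2 * (B * of_int q)^2 - 2 * B * of_int q * (of_int \<alpha> * v j + of_int \<beta> * v k)"
      using \<sigma>jk sign_powers unfolding t_def vE by (simp add: algebra_simps)
    show ?thesis unfolding corr new_dd n p_def using kappa_pos[of X] pos
      by (simp add: field_simps power2_eq_square)
  qed
  ultimately have "normal_form X lam ?mu' (\<sigma> \<circ> \<tau>) e' (\<lambda>i. m i - t i) (F \<union> {\<sigma> j, \<sigma> k})"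
    using refl_linear[OF lin] mcc unfolding l_def B_def
    by (intro normal_form_update[OF D]) (auto simp: t_def refl_cc)
  then show ?thesis by blast
qed


text \<open>Reflecting in a single root (gamma eps_j, n) with 2n = kappa u gamma q flips the sign of
  coordinate j and translates it by -q B.\<close>
lemma normal_form_single_step:
  fixes \<gamma> q n :: int
  assumes D: "normal_form X lam mu \<sigma> e m F" and \<gamma>: "\<gamma> \<noteq> 0" and A: "X \<noteq> A1"
    and q: "2 * of_int n = kappa X * trans_unit X * of_int \<gamma> * of_int q"
    and q_even: "even q \<or> X \<in> {C1, B2, BC2}" and pos: "lam cc > 0"
  shows "\<exists>\<sigma>' e' m' F'. normal_form X lam (refl X (single_root (of_int \<gamma>) j, n) mu) \<sigma>' e' m' F'"
proof -
  define B where "B = trans_unit X * lam cc"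
  define l where "l i = lam (Ej i)" for i
  define v where "v i = mu (Ej i)" for i
  have lin: "linear_functional mu" and mcc: "mu cc = lam cc" and \<sigma>: "bij \<sigma>"
    and e: "\<forall>i. e i \<in> {1, -1}" and par: "parity_ok X (sum m F)"
    and vE: "\<And>i. v i = of_int (e i) * (l (\<sigma> i) + B * of_int (m (\<sigma> i)))"
    using D unfolding normal_form_def B_def l_def v_def by auto
  have \<gamma>': "(of_int \<gamma> :: real) \<noteq> 0" using \<gamma> by simp
  have n: "of_int n = kappa X * of_int \<gamma> * B * of_int q / (2 * lam cc)"
    using q pos unfolding B_def by (simp add: field_simps)
  have sign: "of_int (e j) * of_int (e j) = (1::real)" using e by (auto intro: sign_square)
  define p where "p = (2 * v j - B * of_int q) / of_int \<gamma>"
  let ?mu' = "refl X (single_root (of_int \<gamma>) j, n) mu"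
  have p: "2 / of_int \<gamma> * v j - 2 * of_int n / (kappa X * (of_int \<gamma>)^2) * lam cc = p"
    unfolding n p_def using \<gamma>' kappa_pos[of X] pos by (simp add: field_simps power2_eq_square)
  have new_Ej: "\<And>i. ?mu' (Ej i) = v i - p * single_root (of_int \<gamma>) j i"
    unfolding refl_single_Ej[OF lin \<gamma>'] mcc p[unfolded v_def] v_def ..
  have new_dd: "?mu' dd = mu dd - p * of_int n"
    unfolding refl_dd coroot_single_value[OF lin \<gamma>'] mcc p[unfolded v_def] ..
  define e' where "e' i = (if i = j then - e j else e i)" for i
  define t where "t i = (if i = \<sigma> j then q * e j else 0)" for i
  have "\<forall>i. e' i \<in> {1, -1}" using e unfolding e'_def by auto
  moreover have "parity_ok X (sum m F - sum t {\<sigma> j})"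
    using parity_ok_shift[OF par A q_even] by (simp add: t_def)
  moreover have "?mu' (Ej i) = of_int (e' i) * (l (\<sigma> i) + B * of_int (m (\<sigma> i) - t (\<sigma> i)))" for i
  proof (cases "i = j")
    case True
    have "?mu' (Ej j) = v j - p * of_int \<gamma>" using new_Ej[of j] by (simp add: single_root_def eps_def)
    also have "\<dots> = - v j + B * of_int q" unfolding p_def using \<gamma>' by simp
    finally show ?thesis using True sign unfolding vE e'_def t_def by (simp add: algebra_simps)
  next
    case False
    then have "\<sigma> i \<noteq> \<sigma> j" using \<sigma> by (auto dest: bij_is_inj injD)
    then show ?thesis using False new_Ej[of i] vE[of i] by (simp add: single_root_def eps_def e'_def t_def)
  qed
  moreover have "?mu' dd = mu dd + kappa X / (2 * lam cc)
      * (\<Sum>i\<in>{\<sigma> j}. (B * of_int (t i))^2 - 2 * B * of_int (t i) * (l i + B * of_int (m i)))"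
  proof -
    have corr: "(\<Sum>i\<in>{\<sigma> j}. (B * of_int (t i))^2 - 2 * B * of_int (t i) * (l i + B * of_int (m i)))
       = (B * of_int q)^2 - 2 * B * of_int q * v j"
      using sign unfolding t_def vE by (simp add: algebra_simps power2_eq_square)
    show ?thesis unfolding corr new_dd n p_def using kappa_pos[of X] pos \<gamma>'
      by (simp add: field_simps power2_eq_square)
  qed
  ultimately have "normal_form X lam ?mu' \<sigma> e' (\<lambda>i. m i - t i) (F \<union> {\<sigma> j})"
    using refl_linear[OF lin] mcc \<sigma> A unfolding l_def B_def
    by (intro normal_form_update[OF D]) (auto simp: t_def refl_cc)
  then show ?thesis by blast
qed

lemma orbit_normal_form:
  assumes lin: "linear_functional lam" and pos: "lam cc > 0" and mu: "mu \<in> orbit X lam"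
  shows "\<exists>\<sigma> e m F. normal_form X lam mu \<sigma> e m F"
  using mu
proof (induction rule: orbit.induct)
  case base
  then show ?case using normal_form_base[OF lin] by blast
next
  case (step mu r)
  then obtain \<sigma> e m F where D: "normal_form X lam mu \<sigma> e m F" by blast
  obtain a n where r: "r = (a, n)" by (cases r)
  from step.hyps(2) have "(a, n) \<in> roots X" unfolding r .
  then show ?case
  proof (cases rule: root_shapes)
    case (pair \<alpha> \<beta> q j k)
    then show ?thesis using normal_form_pair_step[OF D pair(2-6) pos] r by simp
  next
    case (single \<gamma> q j)
    then have "\<gamma> \<noteq> 0" by auto
    then show ?thesis using normal_form_single_step[OF D _ single(3-5) pos] single(1) r by simp
  qed
qed


subsection \<open>Nonnegativity of the total gain\<close>

lemma gain_alt: "gain B l m = B * (2 * l * of_int m + B * (of_int m)^2)"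
  unfolding gain_def by (simp add: algebra_simps power2_eq_square)

lemma abs_le_square_int: "\<bar>real_of_int m\<bar> \<le> (real_of_int m)^2"
proof (cases "m = 0")
  case False
  then have "\<bar>real_of_int m\<bar> * 1 \<le> \<bar>real_of_int m\<bar> * \<bar>real_of_int m\<bar>"
    by (intro mult_left_mono) linarith+
  then show ?thesis by (simp add: power2_eq_square)
qed simp

lemma cross_term_lower: "2 * l * of_int m \<ge> - (2 * \<bar>l\<bar> * \<bar>real_of_int m\<bar>)"
  using abs_ge_minus_self[of "2 * l * of_int m"] by (simp add: abs_mult)

lemma gain_nonneg_box:
  assumes B: "B > 0" and l: "\<bar>l\<bar> \<le> B / 2"
  shows "gain B l m \<ge> 0"
proof -
  have "2 * \<bar>l\<bar> * \<bar>real_of_int m\<bar> \<le> B * \<bar>real_of_int m\<bar>" using l by (intro mult_right_mono) auto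
  also have "\<dots> \<le> B * (of_int m)^2" using abs_le_square_int B by (intro mult_left_mono) auto
  finally show ?thesis unfolding gain_alt using B cross_term_lower[of l m] by simp
qed

lemma gain_nonneg_even:
  assumes B: "B > 0" and l: "\<bar>l\<bar> \<le> B" and m: "even m"
  shows "gain B l m \<ge> 0"
proof (cases "m = 0")
  case False
  define u where "u = \<bar>real_of_int m\<bar>"
  have "\<bar>m\<bar> \<ge> 2" using m False by (auto elim!: evenE)
  then have u: "u \<ge> 2" unfolding u_def by linarith
  have "B * u \<ge> B * 2" using u B by (intro mult_left_mono) auto
  then have "u * (B * u - 2 * \<bar>l\<bar>) \<ge> 0" using u l by (intro mult_nonneg_nonneg) auto
  then have "2 * l * of_int m + B * (of_int m)^2 \<ge> 0"
    using cross_term_lower[of l m] unfolding u_def by (simp add: algebra_simps power2_eq_square )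
  then show ?thesis unfolding gain_alt using B by simp
qed (simp add: gain_def)

lemma gain_lower_odd:
  assumes B: "B > 0" and l: "\<bar>l\<bar> \<le> B" and m: "odd m"
  shows "gain B l m \<ge> B * (B - 2 * \<bar>l\<bar>)"
proof -
  define u where "u = \<bar>real_of_int m\<bar>"
  have u: "u \<ge> 1" using m unfolding u_def by (cases "m = 0") auto
  have "B * (u + 1) \<ge> B * 2" using u B by (intro mult_left_mono) auto
  then have "(u - 1) * (B * (u + 1) - 2 * \<bar>l\<bar>) \<ge> 0" using u l by (intro mult_nonneg_nonneg) auto
  then have "2 * l * of_int m + B * (of_int m)^2 \<ge> B - 2 * \<bar>l\<bar>"
    using cross_term_lower[of l m] unfolding u_def by (simp add: algebra_simps power2_eq_square )
  then show ?thesis unfolding gain_alt using B by (intro mult_left_mono) auto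
qed

lemma gain_sum_nonneg_box:
  "B > 0 \<Longrightarrow> (\<And>i. i \<in> F \<Longrightarrow> \<bar>l i\<bar> \<le> B / 2) \<Longrightarrow> (\<Sum>i\<in>F. gain B (l i) (m i)) \<ge> 0"
  by (intro sum_nonneg) (auto intro: gain_nonneg_box)

text \<open>Type A: a translation with total zero does not change the gain sum when all coordinates
  are shifted by a constant, so one may centre them into the box.\<close>
lemma gain_sum_nonneg_differences:
  assumes B: "B > 0" and F: "finite F" and m: "sum m F = 0" and c: "\<And>i j. l i - l j \<le> B"
  shows "(\<Sum>i\<in>F. gain B (l i) (m i)) \<ge> 0"
proof (cases "F = {}")
  case False
  define c0 where "c0 = (Max (l ` F) + Min (l ` F)) / 2"
  have "Max (l ` F) \<in> l ` F" "Min (l ` F) \<in> l ` F" using F False by simp_all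
  then obtain a b where a: "a \<in> F" "l a = Max (l ` F)" and b: "b \<in> F" "l b = Min (l ` F)"
    by (metis imageE)
  have centred: "\<bar>l i - c0\<bar> \<le> B / 2" if "i \<in> F" for i
  proof -
    have "l b \<le> l i" "l i \<le> l a" using F that unfolding a(2) b(2) by simp_all
    then show ?thesis using c[of a b] unfolding c0_def a(2)[symmetric] b(2)[symmetric]
      by (simp add: abs_le_iff field_simps)
  qed
  have "(\<Sum>i\<in>F. gain B (l i) (m i)) = (\<Sum>i\<in>F. gain B (l i - c0) (m i) + 2 * c0 * B * of_int (m i))"
    unfolding gain_def by (intro sum.cong) (auto simp: algebra_simps)
  also have "\<dots> = (\<Sum>i\<in>F. gain B (l i - c0) (m i))"
    using m by (simp add: sum.distrib flip: sum_distrib_left of_int_sum)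
  finally show ?thesis using gain_sum_nonneg_box[OF B, of F "\<lambda>i. l i - c0" m] centred by simp
qed simp

lemma gain_nonneg_odd_pair:
  assumes B: "B > 0" and c: "\<bar>l\<bar> + \<bar>l'\<bar> \<le> B" and m: "odd m" "odd m'"
  shows "gain B l m + gain B l' m' \<ge> 0"
proof -
  have "gain B l m + gain B l' m' \<ge> B * (B - 2 * \<bar>l\<bar>) + B * (B - 2 * \<bar>l'\<bar>)"
    using gain_lower_odd[OF B _ m(1), of l] gain_lower_odd[OF B _ m(2), of l'] c by (intro add_mono) auto
  moreover have "B * (B - 2 * \<bar>l\<bar>) + B * (B - 2 * \<bar>l'\<bar>) = 2 * B * (B - \<bar>l\<bar> - \<bar>l'\<bar>)"
    by (simp add: algebra_simps)
  moreover have "2 * B * (B - \<bar>l\<bar> - \<bar>l'\<bar>) \<ge> 0" using B c by simp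
  ultimately show ?thesis by linarith
qed

text \<open>Types B1, D1, C2: at most one coordinate leaves the box; if it is translated by an odd
  amount, the parity condition provides a second odd translation to pair it with.\<close>
lemma gain_sum_nonneg_pairs:
  assumes B: "B > 0" and F: "finite F" and m: "even (sum m F)"
    and c: "\<And>i j. i \<noteq> j \<Longrightarrow> \<bar>l i\<bar> + \<bar>l j\<bar> \<le> B" and c1: "\<And>i. \<bar>l i\<bar> \<le> B"
  shows "(\<Sum>i\<in>F. gain B (l i) (m i)) \<ge> 0"
proof (cases "\<forall>i\<in>F. \<bar>l i\<bar> \<le> B / 2")
  case True then show ?thesis using gain_sum_nonneg_box[OF B, of F l m] by auto
next
  case False
  then obtain j where j: "j \<in> F" "\<bar>l j\<bar> > B / 2" by auto
  have box: "gain B (l i) (m i) \<ge> 0" if "i \<noteq> j" for i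
    using c[OF that] j(2) by (intro gain_nonneg_box[OF B]) linarith
  show ?thesis
  proof (cases "even (m j)")
    case True
    then have "gain B (l i) (m i) \<ge> 0" for i
      using box gain_nonneg_even[OF B c1] by (cases "i = j") auto
    then show ?thesis by (intro sum_nonneg)
  next
    case False
    have "sum m F = m j + sum m (F - {j})" using F j(1) by (simp add: sum.remove)
    then have "odd (sum m (F - {j}))" using m False by auto
    then obtain k where k: "k \<in> F" "k \<noteq> j" "odd (m k)"
      using dvd_sum[of "F - {j}" 2 m] by auto
    have "(\<Sum>i\<in>F. gain B (l i) (m i))
        = (gain B (l j) (m j) + gain B (l k) (m k)) + (\<Sum>i\<in>F - {j} - {k}. gain B (l i) (m i))"
      using F j(1) k(1,2) by (simp add: sum.remove algebra_simps)
    moreover have "gain B (l j) (m j) + gain B (l k) (m k) \<ge> 0"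
      using gain_nonneg_odd_pair[OF B c[of j k] False k(3)] k(2) by simp
    moreover have "(\<Sum>i\<in>F - {j} - {k}. gain B (l i) (m i)) \<ge> 0"
      using box by (intro sum_nonneg) auto
    ultimately show ?thesis by linarith
  qed
qed


definition coord_cond :: "rtype \<Rightarrow> ('j \<Rightarrow> real) \<Rightarrow> real \<Rightarrow> bool" where
  "coord_cond X l B \<longleftrightarrow>
     (X = A1 \<longrightarrow> (\<forall>i j. l i - l j \<le> B))
   \<and> (X \<in> {B1, D1, C2} \<longrightarrow> (\<forall>j k. j \<noteq> k \<longrightarrow> \<bar>l j\<bar> + \<bar>l k\<bar> \<le> B))
   \<and> (X \<in> {C1, B2, BC2} \<longrightarrow> (\<forall>j. \<bar>l j\<bar> \<le> B / 2))"

lemma ereal_sup_minus_inf_le: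
  fixes f :: "'j \<Rightarrow> real"
  shows "(SUP j. ereal (f j)) - (INF j. ereal (f j)) \<le> ereal c \<longleftrightarrow> (\<forall>i j. f i - f j \<le> c)"
proof
  assume H: "(SUP j. ereal (f j)) - (INF j. ereal (f j)) \<le> ereal c"
  show "\<forall>i j. f i - f j \<le> c"
  proof (intro allI)
    fix i j
    have "ereal (f i) - ereal (f j) \<le> (SUP j. ereal (f j)) - (INF j. ereal (f j))"
      by (intro ereal_minus_mono SUP_upper INF_lower) simp_all
    then have "ereal (f i) - ereal (f j) \<le> ereal c" using H by (rule order_trans)
    then show "f i - f j \<le> c" by simp
  qed
next
  assume H: "\<forall>i j. f i - f j \<le> c"
  obtain j0 :: 'j where True by simp
  have sup_le: "(SUP j. ereal (f j)) \<le> ereal (f k + c)" for k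
    by (rule SUP_least) (use H in \<open>auto simp: algebra_simps\<close>)
  obtain S where S: "(SUP j. ereal (f j)) = ereal S"
    using sup_le[of j0] SUP_upper[of j0 UNIV "\<lambda>j. ereal (f j)"]
    by (cases "(SUP j. ereal (f j))") auto
  have "S - c \<le> f k" for k using sup_le[of k] unfolding S by simp
  then have inf_ge: "ereal (S - c) \<le> (INF j. ereal (f j))" by (intro INF_greatest) simp
  obtain I where I: "(INF j. ereal (f j)) = ereal I"
    using inf_ge INF_lower[of j0 UNIV "\<lambda>j. ereal (f j)"] by (cases "(INF j. ereal (f j))") auto
  show "(SUP j. ereal (f j)) - (INF j. ereal (f j)) \<le> ereal c" using inf_ge unfolding S I by simp
qed

lemma dmin_cond_iff_coord_cond:
  "dmin_cond X lam \<longleftrightarrow> coord_cond X (\<lambda>j. lam (Ej j)) (trans_unit X * lam cc)"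
  unfolding dmin_cond_def coord_cond_def Let_def trans_unit_def
  by (cases X) (simp_all add: ereal_sup_minus_inf_le)

subsection \<open>Sufficiency\<close>

lemma single_bound_from_pairs:
  assumes "infinite (UNIV :: 'j set)" "\<And>j k :: 'j. j \<noteq> k \<Longrightarrow> \<bar>l j\<bar> + \<bar>l k\<bar> \<le> B"
  shows "\<bar>l i\<bar> \<le> (B :: real)"
proof -
  have "UNIV \<noteq> {i}" using assms(1) by (metis finite.emptyI finite_insert)
  then obtain k where "k \<noteq> i" by auto
  then show ?thesis using assms(2)[of i k] by simp
qed

lemma gain_sum_nonneg:
  assumes inf: "infinite (UNIV :: 'j set)" and B: "B > 0" and F: "finite F"
    and par: "parity_ok X (sum m F)" and c: "coord_cond X l B"
  shows "(\<Sum>i\<in>F. gain B (l (i :: 'j)) (m i)) \<ge> 0"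
proof -
  consider "X = A1" | "X \<in> {B1, D1, C2}" | "X \<in> {C1, B2, BC2}" by (cases X) auto
  then show ?thesis
  proof cases
    case 1
    then show ?thesis using c par by (intro gain_sum_nonneg_differences[OF B F])
        (auto simp: coord_cond_def parity_ok_def)
  next
    case 2
    then have pairs: "\<And>j k. j \<noteq> k \<Longrightarrow> \<bar>l j\<bar> + \<bar>l k\<bar> \<le> B" using c by (auto simp: coord_cond_def)
    show ?thesis using 2 par single_bound_from_pairs[OF inf pairs]
      by (intro gain_sum_nonneg_pairs[OF B F _ pairs]) (auto simp: parity_ok_def)
  next
    case 3
    then show ?thesis using c by (intro gain_sum_nonneg_box[OF B]) (auto simp: coord_cond_def)
  qed
qed

lemma d_minimal_if_coord_cond:
  assumes inf: "infinite (UNIV :: 'j set)" and lin: "linear_functional lam" and pos: "lam cc > 0"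
    and c: "coord_cond X (\<lambda>j. lam (Ej j)) (trans_unit X * lam cc)"
  shows "d_minimal X (lam :: 'j tg \<Rightarrow> real)"
  unfolding d_minimal_def
proof
  fix mu assume "mu \<in> orbit X lam"
  then obtain \<sigma> e m F where "normal_form X lam mu \<sigma> e m F" using orbit_normal_form[OF lin pos] by blast
  then have F: "finite F" and par: "parity_ok X (sum m F)"
    and mu_dd: "mu dd = lam dd + kappa X / (2 * lam cc)
                 * (\<Sum>i\<in>F. gain (trans_unit X * lam cc) (lam (Ej i)) (m i))"
    unfolding normal_form_def by auto
  have "trans_unit X * lam cc > 0" using pos by (simp add: trans_unit_def)
  then have "(\<Sum>i\<in>F. gain (trans_unit X * lam cc) (lam (Ej i)) (m i)) \<ge> 0"
    using gain_sum_nonneg[OF inf _ F par c] by simp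
  moreover have "kappa X / (2 * lam cc) \<ge> 0" using kappa_pos[of X] pos by simp
  ultimately have "kappa X / (2 * lam cc)
                     * (\<Sum>i\<in>F. gain (trans_unit X * lam cc) (lam (Ej i)) (m i)) \<ge> 0"
    by (rule mult_nonneg_nonneg[rotated])
  then show "lam dd \<le> mu dd" unfolding mu_dd by linarith
qed

subsection \<open>Necessity\<close>

text \<open>Reflecting in a root (a, n) changes the d-value by -lam(coroot) n, so for a d-minimal lam
  this product is never positive.\<close>
lemma d_minimal_coroot:
  assumes "d_minimal X lam" "(a, n) \<in> roots X"
  shows "lam (coroot X (a, n)) * of_int n \<le> 0"
proof -
  have "refl X (a, n) lam \<in> orbit X lam" using assms(2) by (intro orbit.step orbit.base)
  then show ?thesis using assms(1) refl_dd[of X a n lam] unfolding d_minimal_def by force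
qed

definition pm_sign :: "real \<Rightarrow> real" where
  "pm_sign x = (if x \<ge> 0 then 1 else -1)"

lemma pm_sign: "pm_sign x \<in> {1, -1}" "pm_sign x * x = \<bar>x\<bar>"
  by (simp_all add: pm_sign_def)

lemma coord_cond_if_d_minimal:
  assumes lin: "linear_functional lam" and pos: "lam cc > 0" and dmin: "d_minimal X lam"
  shows "coord_cond X (\<lambda>j. lam (Ej j)) (trans_unit X * lam cc)"
proof -
  define l where "l j = lam (Ej j)" for j
  have pairs: "\<bar>l j\<bar> + \<bar>l k\<bar> \<le> lam cc / kappa X"
    if X: "X \<noteq> A1" "X \<noteq> B2" and jk: "j \<noteq> k" for j k
  proof -
    let ?a = "pair_root (pm_sign (l j)) (pm_sign (l k)) j k"
    have "?a \<in> Dset" using jk pm_sign(1) unfolding Dset_def pair_root_def by blast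
    then have "(?a, 1) \<in> roots X" using X by (cases X) (auto simp: roots_def Bset_def Cset_def BCset_def)
    then have "lam (coroot X (?a, 1)) * of_int 1 \<le> 0" by (rule d_minimal_coroot[OF dmin])
    then show ?thesis using coroot_pair_value[OF lin jk pm_sign(1)[of "l j"] pm_sign(1)[of "l k"], of X 1]
      unfolding l_def by (simp add: pm_sign(2))
  qed
  have differences: "l i - l j \<le> lam cc" if X: "X = A1" for i j
  proof (cases "i = j")
    case False
    have "pair_root 1 (-1) i j \<in> Aset" using False unfolding Aset_def pair_root_def by force
    then have "(pair_root 1 (-1) i j, 1) \<in> roots X" using X by (simp add: roots_def)
    then have "lam (coroot X (pair_root 1 (-1) i j, 1)) * of_int 1 \<le> 0" by (rule d_minimal_coroot[OF dmin])
    then show ?thesis using coroot_pair_value[OF lin False, of 1 "-1" X 1] X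
      unfolding l_def by (simp add: kappa_def)
  qed (use pos in simp)
  have box: "\<bar>l j\<bar> \<le> lam cc" if X: "X \<in> {C1, B2, BC2}" for j
  proof -
    define \<gamma> where "\<gamma> = (if X = B2 then 1 else 2) * pm_sign (l j)"
    have "\<gamma> \<noteq> 0" using pm_sign(1)[of "l j"] unfolding \<gamma>_def by auto
    have "single_root \<gamma> j \<in> (if X = B2 then shortset else longset)"
      unfolding \<gamma>_def shortset_def longset_def single_root_def using pm_sign(1) by auto
    then have "(single_root \<gamma> j, 1) \<in> roots X" using X by (auto simp: roots_def Bset_def Cset_def BCset_def)
    then have "lam (coroot X (single_root \<gamma> j, 1)) * of_int 1 \<le> 0" by (rule d_minimal_coroot[OF dmin])
    then have "2 / \<gamma> * l j - 2 / (kappa X * \<gamma>^2) * lam cc \<le> 0"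
      using coroot_single_value[OF lin \<open>\<gamma> \<noteq> 0\<close>, of X j 1] unfolding l_def by simp
    then show ?thesis using X unfolding \<gamma>_def kappa_def pm_sign_def
      by (cases "l j \<ge> 0") (auto simp: field_simps power2_eq_square)
  qed
  show ?thesis unfolding coord_cond_def l_def[symmetric]
    using differences pairs box by (auto simp: trans_unit_def kappa_def mult.commute)
qed

theorem theorem4p4:
  fixes X :: rtype and lam :: "'j tg \<Rightarrow> real"
  assumes "infinite (UNIV :: 'j set)"
    and "linear_functional lam"
    and "lam cc > 0"
  shows "d_minimal X lam \<longleftrightarrow> dmin_cond X lam"
  unfolding dmin_cond_iff_coord_cond
  using coord_cond_if_d_minimal[OF assms(2,3)] d_minimal_if_coord_cond[OF assms] by blast

end
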